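(* Let $\nu$ be an infinite cardinal, let $\mu=\operatorname{cf}(\nu)$, and let $\lambda$ be a cardinal. If $\mu\not\to_{hc}(\mu)^2_\lambda$, then $\nu\not\to_{hc}(\nu)^2_\lambda$.
   Context: $[S]^2$ denotes the set of $2$-element subsets of $S$. A graph $G=(V,E)$ is highly connected if for every $D\subseteq V$ with $|D|<|V|$ the graph induced on $V\setminus D$ is connected. For cardinals $\nu,\mu,\lambda$, $\nu\to_{hc}(\mu)^2_\lambda$ means: for every $c:[\nu]^2\to\lambda$ there exist $\xi<\lambda$ and $X\subseteq\nu$ with $|X|=\mu$ such that $(X,c^{-1}(\xi)\cap[X]^2)$ is highly connected; $\not\to_{hc}$ is its negation. *)

theory Defs
  imports Main "HOL-Library.Ramsey"
begin

unbundle cardinal_syntax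

definition graph_connected :: "'a set \<Rightarrow> ('a \<Rightarrow> 'a \<Rightarrow> bool) \<Rightarrow> bool" where
  "graph_connected W E \<longleftrightarrow>
     (\<forall>x\<in>W. \<forall>y\<in>W. (x, y) \<in> ({(u, v). u \<in> W \<and> v \<in> W \<and> u \<noteq> v \<and> E u v})\<^sup>*)"

definition highly_connected :: "'a set \<Rightarrow> ('a \<Rightarrow> 'a \<Rightarrow> bool) \<Rightarrow> bool" where
  "highly_connected V E \<longleftrightarrow> (\<forall>D. D \<subseteq> V \<and> |D| <o |V| \<longrightarrow> graph_connected (V - D) E)"

text \<open>hc_arrow N M L: |N| \<rightarrow>_hc (|M|)^2_|L|. Colourings are maps on 2-element subsets.\<close>
definition hc_arrow :: "'a set \<Rightarrow> 'b set \<Rightarrow> 'l set \<Rightarrow> bool" where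
  "hc_arrow N M L \<longleftrightarrow>
     (\<forall>c :: 'a set \<Rightarrow> 'l. (\<forall>e \<in> [N]\<^bsup>2\<^esup>. c e \<in> L) \<longrightarrow>
        (\<exists>\<xi>\<in>L. \<exists>X. X \<subseteq> N \<and> |X| =o |M| \<and>
           highly_connected X (\<lambda>x y. {x, y} \<in> [X]\<^bsup>2\<^esup> \<and> c {x, y} = \<xi>)))"

end

theory Submission
  imports Defs
begin

(*
  Choose for every v a point \<pi> v of a cofinal set K of size cf \<nu> lying above v, and colour a
  pair {x, y} with \<pi> x \<noteq> \<pi> y by the colour of {\<pi> x, \<pi> y}. A subset of K of size less
  than cf \<nu> is bounded, so its preimage under \<pi> has size less than \<nu>. Consequently \<pi> maps
  a monochromatic highly connected set of size \<nu> onto a highly connected subset of K of size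
  cf \<nu> in the same colour, which the colouring of K excludes.
*)

lemma graph_connected_image:
  assumes "graph_connected W E"
    and "\<And>x y. x \<in> W \<Longrightarrow> y \<in> W \<Longrightarrow> E x y \<Longrightarrow> f x \<noteq> f y \<Longrightarrow> F (f x) (f y)"
  shows "graph_connected (f ` W) F"
  unfolding graph_connected_def
proof (intro ballI)
  let ?R = "{(u, v). u \<in> W \<and> v \<in> W \<and> u \<noteq> v \<and> E u v}"
  let ?S = "{(u, v). u \<in> f ` W \<and> v \<in> f ` W \<and> u \<noteq> v \<and> F u v}"
  have image_path: "(f x, f y) \<in> ?S\<^sup>*" if "(x, y) \<in> ?R\<^sup>*" for x y
    using that
  proof (induction rule: rtrancl_induct)
    case (step y z)
    show ?case
    proof (cases "f y = f z")
      case False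
      with step.hyps(2) assms(2) have "(f y, f z) \<in> ?S" by blast
      with step.IH show ?thesis by (rule rtrancl_into_rtrancl)
    qed (use step.IH in simp)
  qed simp
  fix a b assume "a \<in> f ` W" "b \<in> f ` W"
  then obtain x y where "x \<in> W" "y \<in> W" "a = f x" "b = f y" by blast
  with assms(1) image_path show "(a, b) \<in> ?S\<^sup>*" unfolding graph_connected_def by blast
qed

lemma highly_connected_image:
  assumes "highly_connected X E"
    and "\<And>x y. x \<in> X \<Longrightarrow> y \<in> X \<Longrightarrow> E x y \<Longrightarrow> f x \<noteq> f y \<Longrightarrow> F (f x) (f y)"
    and "\<And>D. D \<subseteq> f ` X \<Longrightarrow> |D| <o |f ` X| \<Longrightarrow> |{x \<in> X. f x \<in> D}| <o |X|"
  shows "highly_connected (f ` X) F"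
  unfolding highly_connected_def
proof (intro allI impI, elim conjE)
  fix D assume "D \<subseteq> f ` X" "|D| <o |f ` X|"
  define D' where "D' = {x \<in> X. f x \<in> D}"
  have "D' \<subseteq> X" "|D'| <o |X|" unfolding D'_def using assms(3) \<open>D \<subseteq> f ` X\<close> \<open>|D| <o |f ` X|\<close> by auto
  then have "graph_connected (X - D') E"
    using assms(1) unfolding highly_connected_def by simp
  then have "graph_connected (f ` (X - D')) F"
    using assms(2) by (rule graph_connected_image) auto
  moreover have "f ` (X - D') = f ` X - D" unfolding D'_def by auto
  ultimately show "graph_connected (f ` X - D) F" by simp
qed

lemma card_of_UN_under_ordLess:
  assumes "Card_order r" and "infinite (Field r)"
    and "B \<subseteq> Field r" and "\<not> cofinal B r"
  shows "|\<Union>b\<in>B. under r b| <o r"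
proof -
  have wo: "wo_rel r" using assms(1) unfolding card_order_on_def wo_rel_def by simp
  obtain k where k: "k \<in> Field r" and "\<forall>b\<in>B. \<not> (k \<noteq> b \<and> (k, b) \<in> r)"
    using assms(4) unfolding cofinal_def by blast
  then have bk: "(b, k) \<in> r" if "b \<in> B" for b
    using wo_rel.in_notinI[OF wo] assms(3) that by blast
  obtain j where j: "j \<in> Field r" "k \<noteq> j" "(k, j) \<in> r"
    using infinite_Card_order_limit[OF assms(1,2) k] by blast
  have "(\<Union>b\<in>B. under r b) \<subseteq> under r k"
    using bk wo_rel.TRANS[OF wo] unfolding under_def trans_def by blast
  also have "under r k \<subseteq> underS r j"
    using j wo_rel.TRANS[OF wo] wo_rel.ANTISYM[OF wo]
    unfolding under_def underS_def trans_def antisym_def by blast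
  finally have "|\<Union>b\<in>B. under r b| \<le>o |underS r j|" by (rule card_of_mono1)
  also have "|underS r j| <o r" using card_of_underS[OF assms(1) j(1)] .
  finally show ?thesis .
qed

lemma card_of_vimage_ordLess_cofinality:
  assumes r: "card_order_on V r" and "infinite V"
    and "K \<subseteq> V" and minimal: "\<forall>K'. K' \<subseteq> V \<and> cofinal K' r \<longrightarrow> |K| \<le>o |K'|"
    and above: "\<And>v. v \<in> V \<Longrightarrow> (v, \<pi> v) \<in> r"
    and "Y \<subseteq> K" and "|Y| <o |K|"
  shows "|\<pi> -` Y \<inter> V| <o |V|"
proof -
  have field: "Field r = V" and card: "Card_order r" using card_order_on_Card_order[OF r] by auto
  have "\<not> cofinal Y r"
    using minimal assms(3,6,7) not_ordLess_ordLeq by blast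
  with assms(2,3,6) have "|\<Union>b\<in>Y. under r b| <o r"
    by (intro card_of_UN_under_ordLess[OF card]) (auto simp: field)
  moreover have "\<pi> -` Y \<inter> V \<subseteq> (\<Union>b\<in>Y. under r b)"
    using above unfolding under_def by blast
  ultimately have "|\<pi> -` Y \<inter> V| <o r"
    using card_of_mono1 ordLeq_ordLess_trans by blast
  then show ?thesis using card_of_unique[OF r] ordLess_ordIso_trans by blast
qed

abbreviation colour_class :: "'a set \<Rightarrow> ('a set \<Rightarrow> 'l) \<Rightarrow> 'l \<Rightarrow> 'a \<Rightarrow> 'a \<Rightarrow> bool" where
  "colour_class X c \<xi> \<equiv> \<lambda>x y. {x, y} \<in> [X]\<^bsup>2\<^esup> \<and> c {x, y} = \<xi>"

lemma not_hc_arrow_pullback: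
  assumes "\<pi> ` V \<subseteq> K" and "[K]\<^bsup>2\<^esup> \<noteq> {}"
    and small_fibres: "\<And>Y. Y \<subseteq> K \<Longrightarrow> |Y| <o |K| \<Longrightarrow> |\<pi> -` Y \<inter> V| <o |V|"
    and "\<not> hc_arrow K K L"
  shows "\<not> hc_arrow V V L"
proof -
  obtain c where cL: "\<forall>e\<in>[K]\<^bsup>2\<^esup>. c e \<in> L"
    and noK: "\<forall>\<xi>\<in>L. \<forall>A. A \<subseteq> K \<and> |A| =o |K| \<longrightarrow> \<not> highly_connected A (colour_class A c \<xi>)"
    using assms(4) unfolding hc_arrow_def by blast
  obtain e0 where e0: "e0 \<in> [K]\<^bsup>2\<^esup>" using assms(2) by blast
  define c' where "c' e = c (if \<pi> ` e \<in> [K]\<^bsup>2\<^esup> then \<pi> ` e else e0)" for e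
  have c'L: "\<forall>e\<in>[V]\<^bsup>2\<^esup>. c' e \<in> L" using cL e0 by (simp add: c'_def)
  have "\<not> highly_connected X (colour_class X c' \<xi>)"
    if \<xi>: "\<xi> \<in> L" and X: "X \<subseteq> V" "|X| =o |V|" for \<xi> X
  proof
    assume hc: "highly_connected X (colour_class X c' \<xi>)"
    have XK: "\<pi> ` X \<subseteq> K" using X(1) assms(1) by blast
    have small_preimage: "|{x \<in> X. \<pi> x \<in> D}| <o |X|" if "D \<subseteq> K" "|D| <o |K|" for D
    proof -
      have "{x \<in> X. \<pi> x \<in> D} \<subseteq> \<pi> -` D \<inter> V" using X(1) by blast
      then have "|{x \<in> X. \<pi> x \<in> D}| \<le>o |\<pi> -` D \<inter> V|" by (rule card_of_mono1)
      also have "|\<pi> -` D \<inter> V| <o |V|" using small_fibres that .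
      also have "|V| =o |X|" using X(2) by (rule ordIso_symmetric)
      finally show ?thesis .
    qed
    have "|\<pi> ` X| =o |K|"
    proof -
      have "\<not> |\<pi> ` X| <o |K|"
      proof
        assume "|\<pi> ` X| <o |K|"
        then have "|{x \<in> X. \<pi> x \<in> \<pi> ` X}| <o |X|" by (rule small_preimage[OF XK])
        moreover have "{x \<in> X. \<pi> x \<in> \<pi> ` X} = X" by blast
        ultimately show False by (metis ordLess_irreflexive)
      qed
      then show ?thesis
        using card_of_mono1[OF XK] ordLeq_iff_ordLess_or_ordIso by blast
    qed
    moreover have "highly_connected (\<pi> ` X) (colour_class (\<pi> ` X) c \<xi>)"
    proof (rule highly_connected_image[OF hc])
      fix x y assume "x \<in> X" "y \<in> X" "colour_class X c' \<xi> x y" "\<pi> x \<noteq> \<pi> y"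
      moreover have "{\<pi> x, \<pi> y} \<in> [K]\<^bsup>2\<^esup>" using \<open>\<pi> x \<noteq> \<pi> y\<close> \<open>x \<in> X\<close> \<open>y \<in> X\<close> XK by auto
      ultimately show "colour_class (\<pi> ` X) c \<xi> (\<pi> x) (\<pi> y)" by (simp add: c'_def)
    next
      fix D assume "D \<subseteq> \<pi> ` X" "|D| <o |\<pi> ` X|"
      from \<open>|D| <o |\<pi> ` X|\<close> \<open>|\<pi> ` X| =o |K|\<close> have "|D| <o |K|"
        by (rule ordLess_ordIso_trans)
      with \<open>D \<subseteq> \<pi> ` X\<close> XK show "|{x \<in> X. \<pi> x \<in> D}| <o |X|"
        by (intro small_preimage) auto
    qed
    ultimately show False using noK[rule_format, OF \<xi>, of "\<pi> ` X"] XK by blast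
  qed
  with c'L show ?thesis unfolding hc_arrow_def by blast
qed

theorem mainTheorem5:
  fixes V :: "'a set" and r :: "'a rel" and K :: "'a set" and L :: "'l set"
  assumes "card_order_on V r"
    and "infinite V"
    and "K \<subseteq> V" and "cofinal K r"
    and "\<forall>K'. K' \<subseteq> V \<and> cofinal K' r \<longrightarrow> |K| \<le>o |K'|"
    and "\<not> hc_arrow K K L"
  shows "\<not> hc_arrow V V L"
proof -
  have "Field r = V" using card_order_on_Card_order[OF assms(1)] by simp
  with assms(4) have "\<forall>v\<in>V. \<exists>k\<in>K. v \<noteq> k \<and> (v, k) \<in> r" unfolding cofinal_def by simp
  then obtain \<pi> where \<pi>: "\<And>v. v \<in> V \<Longrightarrow> \<pi> v \<in> K \<and> v \<noteq> \<pi> v \<and> (v, \<pi> v) \<in> r"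
    by metis
  obtain v where "v \<in> V" using assms(2) by (metis finite.emptyI ex_in_conv)
  with \<pi> assms(3) have "{\<pi> v, \<pi> (\<pi> v)} \<in> [K]\<^bsup>2\<^esup>" by auto
  then have pairs: "[K]\<^bsup>2\<^esup> \<noteq> {}" by blast
  have above: "\<And>v. v \<in> V \<Longrightarrow> (v, \<pi> v) \<in> r" and into: "\<pi> ` V \<subseteq> K" using \<pi> by auto
  show ?thesis
    using not_hc_arrow_pullback[OF into pairs
        card_of_vimage_ordLess_cofinality[OF assms(1-3,5) above] assms(6)] .
qed

end
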